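(* For $n\ge 1$ and $P$ a Dyck $n$-path, the number of long interior inclines in $P$ plus the number of occurrences of $DXD$ in the elevated path $E(P)=UPD$ equals $n-1$.
   Context: A Dyck $n$-path is a path from $(0,0)$ to $(2n,0)$ with $n$ upsteps $U=(1,1)$ and $n$ downsteps $D=(1,-1)$ never going below the $x$-axis, written as a word in $U,D$. An ascent (resp. descent) is a maximal run of consecutive $U$s (resp. $D$s); an incline is an ascent or descent; it is long if it has at least two steps. The first ascent and last descent of a nonempty Dyck path are not interior; all other inclines are interior. A $DXD$ is an occurrence of $DUD$ or $DDD$ as three consecutive steps. $E(P)=UPD$ is obtained by prepending $U$ and appending $D$. *)

theory Defs
  imports Main
begin

datatype step = U | D

definition height :: "step list \<Rightarrow> int" where
  "height w = int (length (filter (\<lambda>s. s = U) w)) - int (length (filter (\<lambda>s. s = D) w))"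

definition dyck_path :: "nat \<Rightarrow> step list \<Rightarrow> bool" where
  "dyck_path n w \<longleftrightarrow>
     length (filter (\<lambda>s. s = U) w) = n \<and> length (filter (\<lambda>s. s = D) w) = n \<and>
     (\<forall>k \<le> length w. height (take k w) \<ge> 0)"

text \<open>Decomposition of a word into its maximal runs of equal letters (its inclines),
  each recorded as (letter, length), in left-to-right order.\<close>
fun runs :: "step list \<Rightarrow> (step \<times> nat) list" where
  "runs [] = []"
| "runs (x # xs) = (case runs xs of
       [] \<Rightarrow> [(x, 1)]
     | (y, k) # r \<Rightarrow> (if x = y then (y, Suc k) # r else (x, 1) # (y, k) # r))"

definition interior_inclines :: "step list \<Rightarrow> (step \<times> nat) list" where
  "interior_inclines w = butlast (tl (runs w))"

definition num_long_interior_inclines :: "step list \<Rightarrow> nat" where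
  "num_long_interior_inclines w = length (filter (\<lambda>(x, k). k \<ge> 2) (interior_inclines w))"

definition num_DXD :: "step list \<Rightarrow> nat" where
  "num_DXD w = card {i. i + 2 < length w \<and> w ! i = D \<and> w ! (i + 2) = D}"

definition elevate :: "step list \<Rightarrow> step list" where
  "elevate P = U # P @ [D]"

end

theory Submission
  imports Defs
begin

(* A downstep at position j >= 2 either closes a DXD (a D at j - 2) or has a U at j - 2, and
   the latter happens exactly at the end UUD of a long ascent followed by a D or at the start
   UDD of a long descent preceded by a U.  E(P) begins with UU, every ascent of it is followed by
   a D and every descent preceded by a U; its first ascent and last descent are long and its
   other inclines are the interior inclines of P.  So the n + 1 downsteps of E(P) split into its
   DXDs, the long interior inclines of P, and two more. *)

lemma num_DXD_Cons:
  "num_DXD (a # b # c # r) = (if a = D \<and> c = D then 1 else 0) + num_DXD (b # c # r)"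
proof -
  let ?S = "\<lambda>w. {i. i + 2 < length w \<and> w ! i = D \<and> w ! (i + 2) = D}"
  have split: "?S (a # b # c # r) = (if a = D \<and> c = D then {0} else {}) \<union> Suc ` ?S (b # c # r)"
  proof (rule set_eqI)
    fix i
    show "i \<in> ?S (a # b # c # r) \<longleftrightarrow> i \<in> (if a = D \<and> c = D then {0} else {}) \<union> Suc ` ?S (b # c # r)"
      by (cases i) auto
  qed
  have "finite (?S w)" for w
    by (rule finite_subset[of _ "{..<length w}"]) auto
  then have "card (?S (a # b # c # r)) = card (if a = D \<and> c = D then {0::nat} else {}) + card (?S (b # c # r))"
    unfolding split by (subst card_Un_disjoint) (auto simp: card_image)
  then show ?thesis
    unfolding num_DXD_def by simp
qed

lemma num_DXD_short: "length w < 3 \<Longrightarrow> num_DXD w = 0"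
  by (simp add: num_DXD_def)

lemma runs_eq_Nil_iff [simp]: "runs w = [] \<longleftrightarrow> w = []"
  by (cases w) (auto split: list.split)

lemma runs_Cons_hd: "\<exists>k r. runs (x # w) = (x, Suc k) # r"
  by (auto split: list.split)

lemma fst_last_runs: "w \<noteq> [] \<Longrightarrow> fst (last (runs w)) = last w"
  by (induction w) (auto split: list.split)

lemma runs_length_pos: "(x, k) \<in> set (runs w) \<Longrightarrow> k > 0"
proof (induction w arbitrary: x k)
  case (Cons a w)
  then show ?case
    by (cases "runs w") (fastforce split: if_splits)+
qed simp

lemma runs_snoc:
  "w \<noteq> [] \<Longrightarrow> last w = x \<Longrightarrow>
   runs (w @ [x]) = butlast (runs w) @ [(x, Suc (snd (last (runs w))))]"
proof (induction w)
  case (Cons a w)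
  show ?case
  proof (cases "w = []")
    case False
    then obtain y k r where runs_w: "runs w = (y, k) # r"
      by (metis neq_Nil_conv runs_Cons_hd)
    moreover have "r = [] \<Longrightarrow> y = x"
      using fst_last_runs[OF False] runs_w Cons.prems False by simp
    ultimately show ?thesis
      using Cons False by (cases "r = []") auto
  qed (use Cons in simp)
qed simp

definition num_long_runs :: "(step \<times> nat) list \<Rightarrow> nat" where
  "num_long_runs rs = length (filter (\<lambda>(x, k). k \<ge> 2) rs)"

lemma num_long_runs_tl_runs_Cons:
  "num_long_runs (tl (runs (x # b # c # v))) =
     num_long_runs (tl (runs (b # c # v))) + (if x \<noteq> b \<and> b = c then 1 else 0)"
proof -
  obtain k r where "runs (c # v) = (c, Suc k) # r"
    using runs_Cons_hd by blast
  then show ?thesis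
    by (auto simp: num_long_runs_def)
qed

(* The last two summands account for the first incline, which tl (runs w) omits. *)
lemma count_list_D_eq:
  "w \<noteq> [] \<Longrightarrow> last w = D \<Longrightarrow>
   count_list w D = num_DXD w + num_long_runs (tl (runs w)) + 1 + (if take 2 w = [D, D] then 1 else 0)"
proof (induction w rule: induct_list012)
  case (3 x b v)
  show ?case
  proof (cases v)
    case Nil
    then show ?thesis
      using "3.prems" by (cases x) (auto simp: num_DXD_short num_long_runs_def)
  next
    case (Cons c v')
    then show ?thesis
      using "3.IH"(2) "3.prems"
      by (cases x; cases b; cases c) (simp_all add: num_DXD_Cons num_long_runs_tl_runs_Cons del: runs.simps)
  qed
qed (auto simp: num_DXD_short num_long_runs_def)

lemma count_list_eq_length_filter_eq: "count_list w x = length (filter (\<lambda>s. s = x) w)"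
  by (induction w) auto

lemma count_D_dyck_path: "dyck_path n P \<Longrightarrow> count_list P D = n"
  by (simp add: dyck_path_def count_list_eq_length_filter_eq)

lemma height_snoc: "height (w @ [s]) = height w + (if s = U then 1 else -1)"
  by (cases s) (auto simp: height_def)

lemma dyck_path_hd:
  assumes "dyck_path n P" "P \<noteq> []"
  shows "hd P = U"
proof (rule ccontr)
  assume "hd P \<noteq> U"
  then have "take 1 P = [D]"
    using assms(2) by (cases P; cases "hd P") auto
  then show False
    using assms by (auto simp: dyck_path_def height_def dest: spec[of _ 1])
qed

lemma dyck_path_last:
  assumes "dyck_path n P" "P \<noteq> []"
  shows "last P = D"
proof (rule ccontr)
  assume "last P \<noteq> D"
  then have "last P = U"
    by (cases "last P") auto
  then have "P = butlast P @ [U]"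
    using append_butlast_last_id[OF assms(2)] by simp
  moreover have "height P = 0" and "height (butlast P) \<ge> 0"
    using assms(1) by (auto simp: dyck_path_def height_def butlast_conv_take)
  ultimately show False
    by (metis height_snoc add_nonneg_pos zero_less_one order_less_irrefl)
qed

lemma num_long_runs_tl_runs_elevate:
  assumes "P \<noteq> []" "hd P = U" "last P = D"
  shows "num_long_runs (tl (runs (elevate P))) = num_long_interior_inclines P + 1"
proof -
  obtain k r where runs_P: "runs P = (U, k) # r"
    using runs_Cons_hd assms(1,2) by (metis list.collapse)
  have "r \<noteq> []"
    using fst_last_runs[OF assms(1)] assms(3) runs_P by auto
  then obtain m where last_r: "last r = (D, m)"
    using fst_last_runs[OF assms(1)] assms(3) runs_P by (metis last_ConsR prod.collapse)
  have "m > 0"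
    using runs_length_pos[of D m P] runs_P last_r \<open>r \<noteq> []\<close> last_in_set by fastforce
  have "runs (elevate P) = (U, Suc k) # butlast r @ [(D, Suc m)]"
    using runs_snoc[OF assms(1,3)] runs_P \<open>r \<noteq> []\<close> last_r by (simp add: elevate_def)
  then show ?thesis
    using runs_P \<open>m > 0\<close> by (simp add: num_long_runs_def num_long_interior_inclines_def interior_inclines_def)
qed

theorem mainTheorem5:
  fixes n :: nat and P :: "step list"
  assumes "n \<ge> 1" and "dyck_path n P"
  shows "num_long_interior_inclines P + num_DXD (elevate P) = n - 1"
proof -
  have "P \<noteq> []"
    using assms count_D_dyck_path by fastforce
  then have "num_long_runs (tl (runs (elevate P))) = num_long_interior_inclines P + 1"
    using assms(2) dyck_path_hd dyck_path_last num_long_runs_tl_runs_elevate by blast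
  moreover have "count_list (elevate P) D = n + 1"
    using count_D_dyck_path[OF assms(2)] by (simp add: elevate_def)
  moreover have "count_list (elevate P) D =
      num_DXD (elevate P) + num_long_runs (tl (runs (elevate P))) + 1"
    using count_list_D_eq[of "elevate P"] by (simp add: elevate_def)
  ultimately show ?thesis
    by simp
qed

end
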